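(* Let $H(x,p)=\frac12\left(H_{11}p^2+2H_{12}px+H_{22}x^2\right)$ with real coefficients satisfying $H_{11}H_{22}-H_{12}^2=-\alpha^2$, $\alpha>0$. For $t\in\mathbb R$ and $\tau=it$, let $\mathcal P_\tau=\exp(\tau\mathcal L_{X_H})\mathcal P_{Sch}$ be the complex line field on $\mathbb R^2$ spanned by $X_{w_\tau}$, where $$w_\tau=\exp(\tau X_H)(x)=\left(\cos(\alpha t)+iH_{12}\frac{\sin(\alpha t)}{\alpha}\right)x+iH_{11}\frac{\sin(\alpha t)}{\alpha}\,p .$$ Then $\mathcal P_\tau$ is: (a) anti-Kähler if $H_{11}\sin(2\alpha t)<0$; (b) the Schrödinger polarization if $H_{11}\sin(\alpha t)=0$; (c) Kähler if $H_{11}\sin(2\alpha t)>0$; (d) the real polarization $\langle X_{H_{12}x+H_{11}p}\rangle_{\mathbb C}$ if $H_{11}\cos(\alpha t)=0$.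
   Context: Work on $\mathbb R^2$ with coordinates $(x,p)$ and symplectic form $\omega=dx\wedge dp$. The Hamiltonian vector field of a function $f$ is $X_f=\frac{\partial f}{\partial p}\frac{\partial}{\partial x}-\frac{\partial f}{\partial x}\frac{\partial}{\partial p}$. For real $t$, $\exp(tX_H)(x)$ denotes the function $x\circ\phi_t$ where $\phi_t$ is the time-$t$ flow of $X_H$; $\exp(\tau X_H)(x)$ for $\tau=it$ is its analytic continuation in $t$, which gives the displayed formula for $w_\tau$. The Schrödinger (vertical) polarization is $\mathcal P_{Sch}=\langle X_x\rangle_{\mathbb C}=\langle\partial/\partial p\rangle_{\mathbb C}$, and $\mathcal P_\tau=\langle X_{w_\tau}\rangle_{\mathbb C}$. For a complex linear function $w$ on $\mathbb R^2$ write $\frac{i}{2}dw\wedge d\bar w=c\,\omega$; the polarization $\langle X_w\rangle_{\mathbb C}$ is called Kähler if $c>0$ (it is then $T^{(0,1)}$ of a complex structure $J$ for which $(\mathbb R^2,\omega,J)$ is Kähler, $w$ being $J$-holomorphic), anti-Kähler if $c<0$, and real if $c=0$. *)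

theory Defs
  imports "HOL-Analysis.Analysis"
begin

text \<open>Points of R^2 are pairs (x,p); symplectic form omega = dx /\ dp.
  Complex-valued functions f on R^2; partial derivatives taken along the coordinate lines.\<close>

definition partial_x :: "(real \<times> real \<Rightarrow> complex) \<Rightarrow> real \<times> real \<Rightarrow> complex" where
  "partial_x f z = vector_derivative (\<lambda>s. f (fst z + s, snd z)) (at 0)"

definition partial_p :: "(real \<times> real \<Rightarrow> complex) \<Rightarrow> real \<times> real \<Rightarrow> complex" where
  "partial_p f z = vector_derivative (\<lambda>s. f (fst z, snd z + s)) (at 0)"

text \<open>Hamiltonian vector field X_f = f_p d/dx - f_x d/dp, as a complexified tangent vector
  (d/dx-component, d/dp-component).\<close>
definition ham_vf :: "(real \<times> real \<Rightarrow> complex) \<Rightarrow> real \<times> real \<Rightarrow> complex \<times> complex" where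
  "ham_vf f z = (partial_p f z, - partial_x f z)"

definition pol :: "(real \<times> real \<Rightarrow> complex) \<Rightarrow> real \<times> real \<Rightarrow> (complex \<times> complex) set" where
  "pol f z = {(c * fst (ham_vf f z), c * snd (ham_vf f z)) | c. True}"

definition P_Sch :: "real \<times> real \<Rightarrow> (complex \<times> complex) set" where
  "P_Sch = pol (\<lambda>z. complex_of_real (fst z))"

text \<open>The coefficient c in (i/2) dw /\ dwbar = c omega, at the point z:
  (dw /\ dwbar)(d/dx, d/dp) = w_x conj(w_p) - w_p conj(w_x).\<close>
definition kahler_coeff :: "(real \<times> real \<Rightarrow> complex) \<Rightarrow> real \<times> real \<Rightarrow> complex" where
  "kahler_coeff w z = (\<i> / 2) * (partial_x w z * cnj (partial_p w z) - partial_p w z * cnj (partial_x w z))"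

definition is_kahler :: "(real \<times> real \<Rightarrow> complex) \<Rightarrow> bool" where
  "is_kahler w \<longleftrightarrow> (\<forall>z. kahler_coeff w z \<in> \<real> \<and> Re (kahler_coeff w z) > 0)"

definition is_anti_kahler :: "(real \<times> real \<Rightarrow> complex) \<Rightarrow> bool" where
  "is_anti_kahler w \<longleftrightarrow> (\<forall>z. kahler_coeff w z \<in> \<real> \<and> Re (kahler_coeff w z) < 0)"

definition is_real_pol :: "(real \<times> real \<Rightarrow> complex) \<Rightarrow> bool" where
  "is_real_pol w \<longleftrightarrow> (\<forall>z. kahler_coeff w z = 0)"

text \<open>w_tau = exp(tau X_H)(x) for tau = i t, as given by the displayed formula.\<close>
definition w_tau :: "real \<Rightarrow> real \<Rightarrow> real \<Rightarrow> real \<Rightarrow> real \<times> real \<Rightarrow> complex" where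
  "w_tau H11 H12 \<alpha> t z =
     (complex_of_real (cos (\<alpha> * t)) + \<i> * complex_of_real (H12 * sin (\<alpha> * t) / \<alpha>)) * complex_of_real (fst z)
     + \<i> * complex_of_real (H11 * sin (\<alpha> * t) / \<alpha>) * complex_of_real (snd z)"

end

theory Submission
  imports Defs
begin

text \<open>The function w_tau is a complex linear form A x + B p, whose Hamiltonian vector field
  is the constant (B, -A) and for which (i/2) dw /\ dwbar = Im (cnj A * B) omega; for w_tau this
  coefficient is H11 sin(2 alpha t) / (2 alpha), which settles (a), (c) and the reality in (d).
  If H11 sin(alpha t) = 0, resp. H11 cos(alpha t) = 0, then (A, B) is a nonzero complex multiple
  of (1, 0), resp. (H12, H11), and proportional forms span the same line field. The multiplier is
  nonzero because the determinant condition forces H12 \<noteq> 0 when H11 = 0.\<close>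

definition linear_form :: "complex \<Rightarrow> complex \<Rightarrow> real \<times> real \<Rightarrow> complex" where
  "linear_form A B z = A * complex_of_real (fst z) + B * complex_of_real (snd z)"

lemma vector_derivative_affine_of_real:
  "vector_derivative (\<lambda>s. C + complex_of_real s * A) (at 0) = A"
proof -
  have "((\<lambda>s. C + complex_of_real s * A) has_vector_derivative A) (at 0)"
    by (rule has_vector_derivative_eq_rhs, unfold has_vector_derivative_def,
        intro derivative_eq_intros) (auto simp: scaleR_conv_of_real)
  then show ?thesis
    by (simp add: vector_derivative_at)
qed

lemma partial_x_linear_form: "partial_x (linear_form A B) z = A"
  using vector_derivative_affine_of_real[of "linear_form A B z" A]
  by (simp add: partial_x_def linear_form_def algebra_simps)

lemma partial_p_linear_form: "partial_p (linear_form A B) z = B"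
  using vector_derivative_affine_of_real[of "linear_form A B z" B]
  by (simp add: partial_p_def linear_form_def algebra_simps)

lemma pol_linear_form: "pol (linear_form A B) z = {(c * B, c * - A) | c. True}"
  by (simp add: pol_def ham_vf_def partial_x_linear_form partial_p_linear_form)

lemma kahler_coeff_linear_form:
  "kahler_coeff (linear_form A B) z = complex_of_real (Im (cnj A * B))"
  by (simp add: kahler_coeff_def partial_x_linear_form partial_p_linear_form
      complex_eq_iff field_simps)

lemma pol_linear_form_mult:
  assumes "k \<noteq> 0"
  shows "pol (linear_form (k * A) (k * B)) = pol (linear_form A B)"
proof -
  have "{(c * (k * B), c * - (k * A)) | c. True} = {(c * B, c * - A) | c. True}"
  proof (intro set_eqI iffI)
    fix v assume "v \<in> {(c * (k * B), c * - (k * A)) | c. True}"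
    then obtain c where "v = (c * (k * B), c * - (k * A))" by blast
    then show "v \<in> {(c * B, c * - A) | c. True}"
      by (intro CollectI exI[of _ "c * k"]) (simp add: mult_ac)
  next
    fix v assume "v \<in> {(c * B, c * - A) | c. True}"
    then obtain c where "v = (c * B, c * - A)" by blast
    then show "v \<in> {(c * (k * B), c * - (k * A)) | c. True}"
      using assms by (intro CollectI exI[of _ "c / k"]) (simp add: field_simps)
  qed
  then show ?thesis
    by (simp add: fun_eq_iff pol_linear_form)
qed

lemma P_Sch_eq_pol_linear_form: "P_Sch = pol (linear_form 1 0)"
proof -
  have "linear_form 1 0 = (\<lambda>z. complex_of_real (fst z))"
    by (simp add: fun_eq_iff linear_form_def)
  then show ?thesis
    by (simp add: P_Sch_def)
qed

lemma w_tau_eq_linear_form: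
  "w_tau H11 H12 \<alpha> t = linear_form
     (complex_of_real (cos (\<alpha> * t)) + \<i> * complex_of_real (H12 * sin (\<alpha> * t) / \<alpha>))
     (\<i> * complex_of_real (H11 * sin (\<alpha> * t) / \<alpha>))"
  by (simp add: fun_eq_iff w_tau_def linear_form_def)

lemma kahler_coeff_w_tau:
  assumes "\<alpha> \<noteq> 0"
  shows "kahler_coeff (w_tau H11 H12 \<alpha> t) z
           = complex_of_real (H11 * sin (2 * \<alpha> * t) / (2 * \<alpha>))"
  using assms sin_double[of "\<alpha> * t"]
  by (simp add: w_tau_eq_linear_form kahler_coeff_linear_form mult.assoc)

lemma H12_nonzero_if_H11_zero:
  fixes H11 H12 H22 \<alpha> :: real
  assumes "H11 * H22 - H12 ^ 2 = - (\<alpha> ^ 2)" and "\<alpha> \<noteq> 0" and "H11 = 0"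
  shows "H12 \<noteq> 0"
  using assms by auto

lemma pol_w_tau_eq_P_Sch:
  fixes H11 H12 H22 \<alpha> t :: real
  assumes "H11 * H22 - H12 ^ 2 = - (\<alpha> ^ 2)" and "\<alpha> \<noteq> 0" and "H11 * sin (\<alpha> * t) = 0"
  shows "pol (w_tau H11 H12 \<alpha> t) = P_Sch"
proof -
  define A where "A = complex_of_real (cos (\<alpha> * t)) + \<i> * complex_of_real (H12 * sin (\<alpha> * t) / \<alpha>)"
  have "A \<noteq> 0"
  proof
    assume "A = 0"
    then have "cos (\<alpha> * t) = 0" and H12_sin: "H12 * sin (\<alpha> * t) = 0"
      using \<open>\<alpha> \<noteq> 0\<close> by (simp_all add: A_def complex_eq_iff)
    then have "sin (\<alpha> * t) \<noteq> 0"
      using sin_cos_squared_add[of "\<alpha> * t"] by auto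
    then show False
      using H12_nonzero_if_H11_zero[OF assms(1,2)] assms(3) H12_sin by simp
  qed
  have "w_tau H11 H12 \<alpha> t = linear_form (A * 1) (A * 0)"
    using assms(3) by (auto simp: w_tau_eq_linear_form A_def)
  then show ?thesis
    using pol_linear_form_mult[OF \<open>A \<noteq> 0\<close>, of 1 0] by (simp add: P_Sch_eq_pol_linear_form)
qed

lemma pol_w_tau_eq_real_pol:
  fixes H11 H12 H22 \<alpha> t :: real
  assumes "H11 * H22 - H12 ^ 2 = - (\<alpha> ^ 2)" and "\<alpha> \<noteq> 0" and "H11 * cos (\<alpha> * t) = 0"
  shows "pol (w_tau H11 H12 \<alpha> t) = pol (\<lambda>z. complex_of_real (H12 * fst z + H11 * snd z))"
proof -
  have target: "(\<lambda>z. complex_of_real (H12 * fst z + H11 * snd z))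
                  = linear_form (complex_of_real H12) (complex_of_real H11)"
    by (simp add: fun_eq_iff linear_form_def)
  obtain k where "k \<noteq> 0" and
    "w_tau H11 H12 \<alpha> t = linear_form (k * complex_of_real H12) (k * complex_of_real H11)"
  proof (cases "cos (\<alpha> * t) = 0")
    case True
    then have "sin (\<alpha> * t) \<noteq> 0"
      using sin_cos_squared_add[of "\<alpha> * t"] by auto
    then show ?thesis
      using True \<open>\<alpha> \<noteq> 0\<close>
      by (intro that[of "\<i> * complex_of_real (sin (\<alpha> * t) / \<alpha>)"])
         (simp_all add: w_tau_eq_linear_form mult_ac)
  next
    case False
    then have "H11 = 0"
      using assms(3) by simp
    then have "H12 \<noteq> 0"
      using H12_nonzero_if_H11_zero[OF assms(1,2)] by simp
    define A where "A = complex_of_real (cos (\<alpha> * t)) + \<i> * complex_of_real (H12 * sin (\<alpha> * t) / \<alpha>)"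
    have "A \<noteq> 0"
      using False by (simp add: A_def complex_eq_iff)
    then show ?thesis
      using \<open>H11 = 0\<close> \<open>H12 \<noteq> 0\<close>
      by (intro that[of "A / complex_of_real H12"]) (simp_all add: w_tau_eq_linear_form A_def)
  qed
  then show ?thesis
    using pol_linear_form_mult target by simp
qed

theorem proposition3p1:
  fixes H11 H12 H22 \<alpha> t :: real
  assumes "H11 * H22 - H12 ^ 2 = - (\<alpha> ^ 2)" and "\<alpha> > 0"
  shows "(H11 * sin (2 * \<alpha> * t) < 0 \<longrightarrow> is_anti_kahler (w_tau H11 H12 \<alpha> t))
       \<and> (H11 * sin (\<alpha> * t) = 0 \<longrightarrow> pol (w_tau H11 H12 \<alpha> t) = P_Sch)
       \<and> (H11 * sin (2 * \<alpha> * t) > 0 \<longrightarrow> is_kahler (w_tau H11 H12 \<alpha> t))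
       \<and> (H11 * cos (\<alpha> * t) = 0 \<longrightarrow>
            is_real_pol (w_tau H11 H12 \<alpha> t) \<and>
            pol (w_tau H11 H12 \<alpha> t) =
              pol (\<lambda>z. complex_of_real (H12 * fst z + H11 * snd z)))"
proof -
  have "\<alpha> \<noteq> 0"
    using assms(2) by simp
  have "H11 * sin (2 * \<alpha> * t) = 0" if "H11 * cos (\<alpha> * t) = 0"
    using that sin_double[of "\<alpha> * t"] by (auto simp: mult.assoc)
  then show ?thesis
    using assms \<open>\<alpha> \<noteq> 0\<close> pol_w_tau_eq_P_Sch pol_w_tau_eq_real_pol
    by (simp add: is_kahler_def is_anti_kahler_def is_real_pol_def kahler_coeff_w_tau
        zero_less_divide_iff divide_less_0_iff)
qed

end
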